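(* Assume $b_1<n^*$ and $b_2<m^*$. Then every Nash equilibrium $(\sigma^{1*},\sigma^{2*})$ of $\Gamma(b_1,b_2)$ satisfies $|S|=b_1$ for all $S$ in the support of $\sigma^{1*}$ and $|T|=b_2$ for all $T$ in the support of $\sigma^{2*}$. Moreover, with $\overline{\mathcal A_1}=\{S\subseteq\mathcal V:|S|=b_1\}$ and $\overline{\mathcal A_2}=\{T\subseteq\mathcal E:|T|=b_2\}$, a strategy profile $(\sigma^1,\sigma^2)$ is a Nash equilibrium of $\Gamma(b_1,b_2)$ if and only if $\sigma^1\in\Delta(\overline{\mathcal A_1})$ is an optimal solution of $\max_{\sigma^1\in\Delta(\overline{\mathcal A_1})}\min_{T\in\overline{\mathcal A_2}}U_1(\sigma^1,T)$ and $\sigma^2\in\Delta(\overline{\mathcal A_2})$ is an optimal solution of $\min_{\sigma^2\in\Delta(\overline{\mathcal A_2})}\max_{S\in\overline{\mathcal A_1}}U_1(S,\sigma^2)$.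
   Context: Detection model: finite nonempty sets $\mathcal V$, $\mathcal E$, monitoring sets $\mathcal C_i\subseteq\mathcal E$ ($i\in\mathcal V$) with every $e\in\mathcal E$ in some $\mathcal C_i$; $\mathcal C_S=\bigcup_{i\in S}\mathcal C_i$; $F(S,T)=|\mathcal C_S\cap T|$. Set cover: $S\subseteq\mathcal V$ with $\mathcal C_S=\mathcal E$; $n^*$ = minimum size of a set cover. Set packing: $T\subseteq\mathcal E$ with $|\mathcal C_i\cap T|\le1$ for all $i$; $m^*$ = maximum size of a set packing. Game $\Gamma(b_1,b_2)$ ($b_1,b_2$ positive integers): $\mathcal A_1=\{S\subseteq\mathcal V:|S|\le b_1\}$, $\mathcal A_2=\{T\subseteq\mathcal E:|T|\le b_2\}$; mixed strategies $\sigma^1\in\Delta(\mathcal A_1)$, $\sigma^2\in\Delta(\mathcal A_2)$ (independent randomizations); payoffs $U_1(\sigma^1,\sigma^2)=\mathbb E[F(S,T)]$ and $U_2(\sigma^1,\sigma^2)=\mathbb E[|T|]-\mathbb E[F(S,T)]$; pure actions identified with point masses. A Nash equilibrium is a profile $(\sigma^{1*},\sigma^{2*})$ with $U_1(\sigma^{1*},\sigma^{2*})\ge U_1(\sigma^1,\sigma^{2*})$ for all $\sigma^1$ and $U_2(\sigma^{1*},\sigma^{2*})\ge U_2(\sigma^{1*},\sigma^2)$ for all $\sigma^2$. Distributions on $\overline{\mathcal A_j}\subseteq\mathcal A_j$ are viewed as elements of $\Delta(\mathcal A_j)$. *)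

theory Defs
  imports "HOL-Probability.Probability"
begin

definition CS :: "('v \<Rightarrow> 'e set) \<Rightarrow> 'v set \<Rightarrow> 'e set" where
  "CS C S = (\<Union>i\<in>S. C i)"

definition F :: "('v \<Rightarrow> 'e set) \<Rightarrow> 'v set \<Rightarrow> 'e set \<Rightarrow> nat" where
  "F C S T = card (CS C S \<inter> T)"

definition set_cover :: "'v set \<Rightarrow> 'e set \<Rightarrow> ('v \<Rightarrow> 'e set) \<Rightarrow> 'v set \<Rightarrow> bool" where
  "set_cover V E C S \<longleftrightarrow> S \<subseteq> V \<and> CS C S = E"

definition n_star :: "'v set \<Rightarrow> 'e set \<Rightarrow> ('v \<Rightarrow> 'e set) \<Rightarrow> nat" where
  "n_star V E C = Min {card S | S. set_cover V E C S}"

definition set_packing :: "'v set \<Rightarrow> 'e set \<Rightarrow> ('v \<Rightarrow> 'e set) \<Rightarrow> 'e set \<Rightarrow> bool" where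
  "set_packing V E C T \<longleftrightarrow> T \<subseteq> E \<and> (\<forall>i\<in>V. card (C i \<inter> T) \<le> 1)"

definition m_star :: "'v set \<Rightarrow> 'e set \<Rightarrow> ('v \<Rightarrow> 'e set) \<Rightarrow> nat" where
  "m_star V E C = Max {card T | T. set_packing V E C T}"

definition A1 :: "'v set \<Rightarrow> nat \<Rightarrow> 'v set set" where
  "A1 V b1 = {S. S \<subseteq> V \<and> card S \<le> b1}"

definition A2 :: "'e set \<Rightarrow> nat \<Rightarrow> 'e set set" where
  "A2 E b2 = {T. T \<subseteq> E \<and> card T \<le> b2}"

definition A1bar :: "'v set \<Rightarrow> nat \<Rightarrow> 'v set set" where
  "A1bar V b1 = {S. S \<subseteq> V \<and> card S = b1}"

definition A2bar :: "'e set \<Rightarrow> nat \<Rightarrow> 'e set set" where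
  "A2bar E b2 = {T. T \<subseteq> E \<and> card T = b2}"

text \<open>Mixed strategies are pmfs over actions; independent randomisation = product pmf.\<close>

definition U1 :: "('v \<Rightarrow> 'e set) \<Rightarrow> 'v set pmf \<Rightarrow> 'e set pmf \<Rightarrow> real" where
  "U1 C \<sigma>1 \<sigma>2 = measure_pmf.expectation (pair_pmf \<sigma>1 \<sigma>2) (\<lambda>(S, T). real (F C S T))"

definition U2 :: "('v \<Rightarrow> 'e set) \<Rightarrow> 'v set pmf \<Rightarrow> 'e set pmf \<Rightarrow> real" where
  "U2 C \<sigma>1 \<sigma>2 = measure_pmf.expectation (pair_pmf \<sigma>1 \<sigma>2) (\<lambda>(S, T). real (card T) - real (F C S T))"

definition nash :: "'v set \<Rightarrow> 'e set \<Rightarrow> ('v \<Rightarrow> 'e set) \<Rightarrow> nat \<Rightarrow> nat \<Rightarrow> 'v set pmf \<Rightarrow> 'e set pmf \<Rightarrow> bool" where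
  "nash V E C b1 b2 \<sigma>1 \<sigma>2 \<longleftrightarrow>
     set_pmf \<sigma>1 \<subseteq> A1 V b1 \<and> set_pmf \<sigma>2 \<subseteq> A2 E b2 \<and>
     (\<forall>\<tau>1. set_pmf \<tau>1 \<subseteq> A1 V b1 \<longrightarrow> U1 C \<tau>1 \<sigma>2 \<le> U1 C \<sigma>1 \<sigma>2) \<and>
     (\<forall>\<tau>2. set_pmf \<tau>2 \<subseteq> A2 E b2 \<longrightarrow> U2 C \<sigma>1 \<tau>2 \<le> U2 C \<sigma>1 \<sigma>2)"

definition maxmin_opt :: "'v set \<Rightarrow> 'e set \<Rightarrow> ('v \<Rightarrow> 'e set) \<Rightarrow> nat \<Rightarrow> nat \<Rightarrow> 'v set pmf \<Rightarrow> bool" where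
  "maxmin_opt V E C b1 b2 \<sigma>1 \<longleftrightarrow>
     set_pmf \<sigma>1 \<subseteq> A1bar V b1 \<and>
     (\<forall>\<tau>1. set_pmf \<tau>1 \<subseteq> A1bar V b1 \<longrightarrow>
        Min ((\<lambda>T. U1 C \<tau>1 (return_pmf T)) ` A2bar E b2)
          \<le> Min ((\<lambda>T. U1 C \<sigma>1 (return_pmf T)) ` A2bar E b2))"

definition minmax_opt :: "'v set \<Rightarrow> 'e set \<Rightarrow> ('v \<Rightarrow> 'e set) \<Rightarrow> nat \<Rightarrow> nat \<Rightarrow> 'e set pmf \<Rightarrow> bool" where
  "minmax_opt V E C b1 b2 \<sigma>2 \<longleftrightarrow>
     set_pmf \<sigma>2 \<subseteq> A2bar E b2 \<and>
     (\<forall>\<tau>2. set_pmf \<tau>2 \<subseteq> A2bar E b2 \<longrightarrow>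
        Max ((\<lambda>S. U1 C (return_pmf S) \<sigma>2) ` A1bar V b1)
          \<le> Max ((\<lambda>S. U1 C (return_pmf S) \<tau>2) ` A1bar V b1))"

end

(*
  Restricted to full budgets the game is constant-sum, U2 = b2 - U1, and enlarging a placement
  or a target set never hurts its owner.  Hence, by the minimax theorem (obtained here from
  Ville's alternative, proved by Fourier-Motzkin elimination), optimal max-min and min-max
  strategies form a Nash equilibrium, and every equilibrium in full-budget strategies consists
  of optimal strategies.

  A short placement in the support of player 1 would be a set
  cover with fewer than n* sensors.  A short target set in the support of player 2 forces every
  element missed by a support placement S into every target set; then a maximum packing, which
  meets each monitoring set at most once, gives m* <= |S| + |E - C_S| <= E|T| <= b2.
*)

theory Submission
  imports Defs
begin

section \<open>Ville's alternative\<close>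

lemma finite_sets_strictly_separable:
  fixes P Q :: "real set"
  assumes "finite P" "P \<noteq> {}" "finite Q" "\<forall>p\<in>P. \<forall>q\<in>Q. p < q"
  shows "\<exists>t. (\<forall>p\<in>P. p < t) \<and> (\<forall>q\<in>Q. t < q)"
proof (cases "Q = {}")
  case True
  then show ?thesis using assms by (intro exI[of _ "Max P + 1"]) (auto dest: Max_ge[OF assms(1)])
next
  case False
  have "Max P < Min Q" using assms False by auto
  moreover have "\<forall>p\<in>P. p \<le> Max P" "\<forall>q\<in>Q. Min Q \<le> q" using assms by auto
  ultimately show ?thesis by (intro exI[of _ "(Max P + Min Q) / 2"]) force
qed

text \<open>The constraints ask \<open>t\<close> to exceed \<open>-\<beta> k / \<alpha> k\<close> when \<open>\<alpha> k > 0\<close> and to stay below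
  \<open>\<beta> l / -\<alpha> l\<close> when \<open>\<alpha> l < 0\<close>; hypothesis \<open>mixed\<close> says these bounds are compatible.\<close>

lemma strict_affine_system_pos_solvable:
  fixes \<alpha> \<beta> :: "'k \<Rightarrow> real"
  assumes "finite K"
    and nonpos: "\<And>k. k \<in> K \<Longrightarrow> \<alpha> k \<le> 0 \<Longrightarrow> 0 < \<beta> k"
    and mixed: "\<And>k l. k \<in> K \<Longrightarrow> l \<in> K \<Longrightarrow> 0 < \<alpha> k \<Longrightarrow> \<alpha> l < 0 \<Longrightarrow> 0 < \<alpha> k * \<beta> l - \<alpha> l * \<beta> k"
  shows "\<exists>t>0. \<forall>k\<in>K. 0 < t * \<alpha> k + \<beta> k"
proof -
  define P where "P = insert 0 ((\<lambda>k. - \<beta> k / \<alpha> k) ` {k\<in>K. 0 < \<alpha> k})"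
  define Q where "Q = (\<lambda>l. \<beta> l / - \<alpha> l) ` {l\<in>K. \<alpha> l < 0}"
  have "finite P" "P \<noteq> {}" "finite Q" unfolding P_def Q_def using \<open>finite K\<close> by auto
  moreover have "\<forall>p\<in>P. \<forall>q\<in>Q. p < q"
  proof (intro ballI)
    fix p q assume "p \<in> P" "q \<in> Q"
    then obtain l where l: "l \<in> K" "\<alpha> l < 0" "q = \<beta> l / - \<alpha> l" unfolding Q_def by auto
    have "0 < q" using l nonpos[of l] by (simp add: divide_pos_neg)
    moreover have "- \<beta> k / \<alpha> k < \<beta> l / - \<alpha> l" if "k \<in> K" "0 < \<alpha> k" for k
      using mixed[OF that(1) l(1) that(2) l(2)] that(2) l(2) by (simp add: field_simps)
    ultimately show "p < q" using \<open>p \<in> P\<close> l(3) unfolding P_def by auto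
  qed
  ultimately obtain t where t: "\<forall>p\<in>P. p < t" "\<forall>q\<in>Q. t < q"
    by (metis finite_sets_strictly_separable)
  have "0 < t * \<alpha> k + \<beta> k" if "k \<in> K" for k
  proof (cases "\<alpha> k" "0 :: real" rule: linorder_cases)
    case less
    then show ?thesis using t(2) that unfolding Q_def by (auto simp: field_simps)
  next
    case equal
    then show ?thesis using nonpos that by simp
  next
    case greater
    then show ?thesis using t(1) that unfolding P_def by (auto simp: field_simps)
  qed
  moreover have "0 < t" using t(1) unfolding P_def by simp
  ultimately show ?thesis by blast
qed

definition semipositive :: "'a set \<Rightarrow> ('a \<Rightarrow> real) \<Rightarrow> bool" where
  "semipositive K y \<longleftrightarrow> (\<forall>c\<in>K. 0 \<le> y c) \<and> (\<exists>c\<in>K. 0 < y c)"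

definition semipositive_combination :: "('i \<Rightarrow> real) set \<Rightarrow> 'i set \<Rightarrow> ('i \<Rightarrow> real) \<Rightarrow> bool" where
  "semipositive_combination K A d \<longleftrightarrow>
     (\<exists>\<mu>. semipositive K \<mu> \<and> (\<forall>i\<in>A. d i = (\<Sum>c\<in>K. \<mu> c * c i)))"

lemma semipositive_combination_two:
  assumes "finite K" "c \<in> K" "e \<in> K" "0 \<le> \<alpha>" "0 < \<beta>"
  shows "semipositive_combination K A (\<lambda>i. \<alpha> * c i + \<beta> * e i)"
proof -
  define \<mu> where "\<mu> x = (if x = c then \<alpha> else 0) + (if x = e then \<beta> else 0)" for x
  have "(\<Sum>x\<in>K. \<mu> x * x i) = \<alpha> * c i + \<beta> * e i" for i
    using assms(1-3) by (simp add: \<mu>_def distrib_right sum.distrib if_distrib[of "\<lambda>x. x * _"] cong: if_cong)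
  moreover have "semipositive K \<mu>"
    using assms unfolding semipositive_def \<mu>_def by (auto intro!: bexI[of _ e] add_nonneg_pos)
  ultimately show ?thesis unfolding semipositive_combination_def by metis
qed

lemma semipositive_combination_trans:
  assumes "finite K2" and y2: "semipositive K2 y2"
    and comb: "\<forall>d\<in>K2. semipositive_combination K A d"
  shows "semipositive_combination K A (\<lambda>i. \<Sum>d\<in>K2. y2 d * d i)"
proof -
  from comb obtain \<mu> where \<mu>: "\<And>d. d \<in> K2 \<Longrightarrow> semipositive K (\<mu> d)"
    "\<And>d i. d \<in> K2 \<Longrightarrow> i \<in> A \<Longrightarrow> d i = (\<Sum>c\<in>K. \<mu> d c * c i)"
    unfolding semipositive_combination_def by metis
  define y where "y c = (\<Sum>d\<in>K2. y2 d * \<mu> d c)" for c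
  obtain d0 where d0: "d0 \<in> K2" "0 < y2 d0" using y2 unfolding semipositive_def by auto
  obtain c0 where c0: "c0 \<in> K" "0 < \<mu> d0 c0" using \<mu>(1)[OF d0(1)] unfolding semipositive_def by auto
  have nonneg: "0 \<le> y2 d * \<mu> d c" if "d \<in> K2" "c \<in> K" for d c
    using y2 \<mu>(1) that unfolding semipositive_def by auto
  have "0 < y2 d0 * \<mu> d0 c0" using d0 c0 by simp
  also have "\<dots> \<le> y c0"
    unfolding y_def using nonneg c0 by (intro member_le_sum[OF d0(1)] \<open>finite K2\<close>) auto
  finally have "semipositive K y" using nonneg c0 unfolding semipositive_def y_def by (auto intro: sum_nonneg)
  moreover have "(\<Sum>d\<in>K2. y2 d * d i) = (\<Sum>c\<in>K. y c * c i)" if "i \<in> A" for i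
  proof -
    have "(\<Sum>d\<in>K2. y2 d * d i) = (\<Sum>d\<in>K2. \<Sum>c\<in>K. y2 d * (\<mu> d c * c i))"
    proof (rule sum.cong[OF refl])
      fix d assume "d \<in> K2"
      show "y2 d * d i = (\<Sum>c\<in>K. y2 d * (\<mu> d c * c i))"
        using \<mu>(2)[OF \<open>d \<in> K2\<close> that] by (simp add: sum_distrib_left)
    qed
    also have "\<dots> = (\<Sum>c\<in>K. y c * c i)"
      unfolding y_def by (subst sum.swap) (simp add: sum_distrib_right mult.assoc)
    finally show ?thesis .
  qed
  ultimately show ?thesis unfolding semipositive_combination_def by blast
qed

text \<open>One Fourier--Motzkin step: keep the vectors that are nonpositive at \<open>a\<close> and cancel
  coordinate \<open>a\<close> between every vector positive there and every vector negative there.\<close>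

definition fourier_motzkin :: "'i \<Rightarrow> ('i \<Rightarrow> real) set \<Rightarrow> ('i \<Rightarrow> real) set" where
  "fourier_motzkin a K = {c\<in>K. c a \<le> 0} \<union>
     (\<lambda>(c, e) i. c a * e i - e a * c i) ` ({c\<in>K. 0 < c a} \<times> {e\<in>K. e a < 0})"

lemma finite_fourier_motzkin: "finite K \<Longrightarrow> finite (fourier_motzkin a K)"
  unfolding fourier_motzkin_def by simp

lemma fourier_motzkin_nonpos: "d \<in> fourier_motzkin a K \<Longrightarrow> d a \<le> 0"
  unfolding fourier_motzkin_def by auto

lemma semipositive_combination_fourier_motzkin:
  assumes "finite K" "d \<in> fourier_motzkin a K"
  shows "semipositive_combination K A d"
proof (cases "d \<in> K \<and> d a \<le> 0")
  case True
  then show ?thesis using semipositive_combination_two[of K d d 0 1] assms(1) by simp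
next
  case False
  then obtain c e where "c \<in> K" "e \<in> K" "0 < c a" "e a < 0" "d = (\<lambda>i. c a * e i - e a * c i)"
    using assms(2) unfolding fourier_motzkin_def by auto
  then show ?thesis
    using semipositive_combination_two[of K c e "- e a" "c a"] assms(1) by (simp add: algebra_simps)
qed

lemma fourier_motzkin_strict_lift:
  fixes K :: "('i \<Rightarrow> real) set"
  assumes "finite K" "a \<notin> A" "finite A" "\<forall>i\<in>A. 0 \<le> x i"
    and pos: "\<forall>d\<in>fourier_motzkin a K. 0 < (\<Sum>i\<in>A. x i * d i)"
  shows "\<exists>x'. (\<forall>i\<in>insert a A. 0 \<le> x' i) \<and> (\<forall>c\<in>K. 0 < (\<Sum>i\<in>insert a A. x' i * c i))"
proof -
  define L where "L c = (\<Sum>i\<in>A. x i * c i)" for c :: "'i \<Rightarrow> real"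
  have "\<exists>t>0. \<forall>c\<in>K. 0 < t * c a + L c"
  proof (rule strict_affine_system_pos_solvable[OF assms(1)])
    show "0 < L c" if "c \<in> K" "c a \<le> 0" for c
      using pos that unfolding fourier_motzkin_def L_def by auto
    show "0 < c a * L e - e a * L c" if "c \<in> K" "e \<in> K" "0 < c a" "e a < 0" for c e
    proof -
      have "(\<lambda>i. c a * e i - e a * c i) \<in> fourier_motzkin a K"
        unfolding fourier_motzkin_def using that by auto
      then have "0 < (\<Sum>i\<in>A. x i * (c a * e i - e a * c i))" using pos[rule_format] by simp
      then show ?thesis unfolding L_def by (simp add: algebra_simps sum_subtractf sum_distrib_left)
    qed
  qed
  then obtain t where t: "0 < t" "\<forall>c\<in>K. 0 < t * c a + L c" by blast
  have "(\<Sum>i\<in>insert a A. (x(a := t)) i * c i) = t * c a + L c" for c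
    unfolding L_def using assms(2,3) by (simp add: sum.insert) (intro sum.cong, auto)
  then show ?thesis using t assms(4) by (intro exI[of _ "x(a := t)"]) auto
qed

lemma ville_alternative:
  fixes A :: "'i set" and K :: "('i \<Rightarrow> real) set"
  assumes "finite A" "finite K"
  shows "(\<exists>y. semipositive K y \<and> (\<forall>i\<in>A. (\<Sum>c\<in>K. y c * c i) \<le> 0))
       \<or> (\<exists>x. (\<forall>i\<in>A. 0 \<le> x i) \<and> (\<forall>c\<in>K. 0 < (\<Sum>i\<in>A. x i * c i)))"
  using assms
proof (induction A arbitrary: K rule: finite_induct)
  case empty
  show ?case
  proof (cases "K = {}")
    case False
    then show ?thesis by (intro disjI1 exI[of _ "\<lambda>_. 1"]) (auto simp: semipositive_def)
  qed auto
next
  case (insert a A K)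
  let ?K2 = "fourier_motzkin a K"
  from insert.IH[OF finite_fourier_motzkin[OF insert.prems, of a]] show ?case
  proof (elim disjE exE conjE)
    fix y2 assume y2: "semipositive ?K2 y2" "\<forall>i\<in>A. (\<Sum>d\<in>?K2. y2 d * d i) \<le> 0"
    obtain y where y: "semipositive K y"
      "\<forall>i\<in>insert a A. (\<Sum>d\<in>?K2. y2 d * d i) = (\<Sum>c\<in>K. y c * c i)"
      using semipositive_combination_trans[OF finite_fourier_motzkin[OF insert.prems, of a] y2(1)]
        semipositive_combination_fourier_motzkin[OF insert.prems]
      unfolding semipositive_combination_def by blast
    have "(\<Sum>d\<in>?K2. y2 d * d a) \<le> 0"
      using y2(1) fourier_motzkin_nonpos unfolding semipositive_def
      by (intro sum_nonpos mult_nonneg_nonpos) auto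
    then show ?thesis using y y2(2) by (intro disjI1 exI[of _ y]) auto
  next
    fix x assume "\<forall>i\<in>A. 0 \<le> x i" "\<forall>d\<in>?K2. 0 < (\<Sum>i\<in>A. x i * d i)"
    then show ?thesis using fourier_motzkin_strict_lift[OF insert.prems insert.hyps(2,1)] by blast
  qed
qed

text \<open>Ville's alternative speaks about a set of vectors, whereas a payoff matrix may have repeated
  columns; weights on the set are spread evenly over the indices of equal columns.\<close>

lemma sum_weights_pullback:
  fixes y :: "'c \<Rightarrow> real"
  assumes "finite J" "\<forall>c\<in>f ` J. 0 \<le> y c"
  shows "\<exists>w. (\<forall>j\<in>J. 0 \<le> w j) \<and> (\<forall>h. (\<Sum>j\<in>J. w j * h (f j)) = (\<Sum>c\<in>f ` J. y c * h c))"
proof -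
  define n where "n c = card {j\<in>J. f j = c}" for c
  define w where "w j = y (f j) / n (f j)" for j
  have "(\<Sum>j\<in>J. w j * h (f j)) = (\<Sum>c\<in>f ` J. y c * h c)" for h :: "'c \<Rightarrow> real"
  proof -
    have "(\<Sum>j\<in>J. w j * h (f j)) = (\<Sum>c\<in>f ` J. \<Sum>j\<in>{j\<in>J. f j = c}. w j * h (f j))"
      by (rule sum.image_gen[OF assms(1)])
    also have "\<dots> = (\<Sum>c\<in>f ` J. y c * h c)"
    proof (rule sum.cong[OF refl])
      fix c assume "c \<in> f ` J"
      then have "0 < n c" unfolding n_def using assms(1) by (auto simp: card_gt_0_iff)
      have "(\<Sum>j\<in>{j\<in>J. f j = c}. w j * h (f j)) = n c * (y c / n c * h c)"
        unfolding w_def n_def by simp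
      also have "\<dots> = y c * h c" using \<open>0 < n c\<close> by simp
      finally show "(\<Sum>j\<in>{j\<in>J. f j = c}. w j * h (f j)) = y c * h c" .
    qed
    finally show ?thesis .
  qed
  moreover have "\<forall>j\<in>J. 0 \<le> w j" using assms(2) unfolding w_def by auto
  ultimately show ?thesis by blast
qed

lemma pmf_of_weights:
  assumes "finite J" "\<forall>j\<in>J. 0 \<le> w j" "0 < (\<Sum>j\<in>J. w j)"
  shows "\<exists>p. set_pmf p \<subseteq> J \<and> (\<forall>g. (\<Sum>j\<in>J. pmf p j * g j) = (\<Sum>j\<in>J. w j * g j) / (\<Sum>j\<in>J. w j))"
proof -
  define W where "W = (\<Sum>j\<in>J. w j)"
  define f where "f j = (if j \<in> J then w j / W else 0)" for j
  have f_nonneg: "\<And>j. 0 \<le> f j" unfolding f_def W_def using assms(2,3) by auto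
  have "(\<integral>\<^sup>+j. ennreal (f j) \<partial>count_space UNIV) = (\<Sum>j\<in>J. ennreal (f j))"
    by (rule nn_integral_count_space'[OF assms(1)]) (auto simp: f_def)
  also have "\<dots> = ennreal (\<Sum>j\<in>J. f j)" using f_nonneg by (simp add: sum_ennreal)
  also have "(\<Sum>j\<in>J. f j) = 1" using assms(3) unfolding f_def W_def by (simp add: sum_divide_distrib[symmetric])
  finally have "pmf (embed_pmf f) j = f j" for j by (simp add: pmf_embed_pmf[OF f_nonneg])
  moreover have "set_pmf (embed_pmf f) \<subseteq> J"
    by (auto simp: set_pmf_eq f_def \<open>\<And>j. pmf (embed_pmf f) j = f j\<close>)
  ultimately show ?thesis
    by (intro exI[of _ "embed_pmf f"]) (auto simp: f_def W_def sum_divide_distrib intro!: sum.cong)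
qed

lemma pmf_of_semipositive_image:
  assumes "finite J" "semipositive (f ` J) y"
  shows "\<exists>p. set_pmf p \<subseteq> J \<and>
    (\<forall>h. (\<Sum>j\<in>J. pmf p j * h (f j)) = (\<Sum>v\<in>f ` J. y v * h v) / (\<Sum>v\<in>f ` J. y v))"
proof -
  obtain w where w: "\<forall>j\<in>J. 0 \<le> w j" "\<And>h. (\<Sum>j\<in>J. w j * h (f j)) = (\<Sum>v\<in>f ` J. y v * h v)"
    using sum_weights_pullback[OF assms(1), of f y] assms(2) unfolding semipositive_def by blast
  have "0 < (\<Sum>v\<in>f ` J. y v)"
    using assms unfolding semipositive_def by (auto intro: sum_pos2)
  also have "(\<Sum>v\<in>f ` J. y v) = (\<Sum>j\<in>J. w j)" using w(2)[of "\<lambda>_. 1"] by simp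
  finally obtain p where "set_pmf p \<subseteq> J"
    "\<And>g. (\<Sum>j\<in>J. pmf p j * g j) = (\<Sum>j\<in>J. w j * g j) / (\<Sum>j\<in>J. w j)"
    using pmf_of_weights[OF assms(1) w(1)] by blast
  then show ?thesis using w(2)[of "\<lambda>_. 1"] by (intro exI[of _ p]) (simp add: w(2))
qed

lemma pmf_weighted_sum_diff_const:
  assumes "finite X" "set_pmf p \<subseteq> X"
  shows "(\<Sum>x\<in>X. pmf p x * (g x - c)) = (\<Sum>x\<in>X. pmf p x * g x) - c"
  using sum_pmf_eq_1[OF assms]
  by (simp add: right_diff_distrib sum_subtractf sum_distrib_right[symmetric])

lemma ville_alternative_pmf:
  fixes M :: "'i \<Rightarrow> 'j \<Rightarrow> real"
  assumes "finite I" "finite J" "J \<noteq> {}"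
  shows "(\<exists>y. set_pmf y \<subseteq> J \<and> (\<forall>i\<in>I. (\<Sum>j\<in>J. pmf y j * M i j) \<le> c))
       \<or> (\<exists>x. set_pmf x \<subseteq> I \<and> (\<forall>j\<in>J. c < (\<Sum>i\<in>I. pmf x i * M i j)))"
proof -
  define col where "col j = (\<lambda>i. M i j - c)" for j
  have "finite (col ` J)" using assms(2) by simp
  from ville_alternative[OF assms(1) this] show ?thesis
  proof (elim disjE exE conjE)
    fix y assume y: "semipositive (col ` J) y" "\<forall>i\<in>I. (\<Sum>v\<in>col ` J. y v * v i) \<le> 0"
    obtain p where p: "set_pmf p \<subseteq> J"
      "\<And>h. (\<Sum>j\<in>J. pmf p j * h (col j)) = (\<Sum>v\<in>col ` J. y v * h v) / (\<Sum>v\<in>col ` J. y v)"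
      using pmf_of_semipositive_image[OF assms(2) y(1)] by blast
    have "0 \<le> (\<Sum>v\<in>col ` J. y v)" using y(1) unfolding semipositive_def by (auto intro: sum_nonneg)
    then have "(\<Sum>j\<in>J. pmf p j * (M i j - c)) \<le> 0" if "i \<in> I" for i
      using p(2)[of "\<lambda>v. v i"] y(2) that by (simp add: col_def divide_nonpos_nonneg)
    then show ?thesis using p(1) pmf_weighted_sum_diff_const[OF assms(2) p(1)] by auto
  next
    fix x assume x: "\<forall>i\<in>I. 0 \<le> x i" "\<forall>v\<in>col ` J. 0 < (\<Sum>i\<in>I. x i * v i)"
    have x_pos: "0 < (\<Sum>i\<in>I. x i)"
    proof (rule ccontr)
      assume "\<not> 0 < (\<Sum>i\<in>I. x i)"
      then have "(\<Sum>i\<in>I. x i) = 0" using x(1) sum_nonneg[of I x] by simp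
      then have "\<forall>i\<in>I. x i = 0" using x(1) assms(1) by (simp add: sum_nonneg_eq_0_iff)
      then show False using x(2) assms(3) by auto
    qed
    obtain p where p: "set_pmf p \<subseteq> I"
      "\<And>g. (\<Sum>i\<in>I. pmf p i * g i) = (\<Sum>i\<in>I. x i * g i) / (\<Sum>i\<in>I. x i)"
      using pmf_of_weights[OF assms(1) x(1) x_pos] by blast
    have "0 < (\<Sum>i\<in>I. pmf p i * (M i j - c))" if "j \<in> J" for j
      using p(2)[of "\<lambda>i. M i j - c"] x(2) that x_pos by (simp add: col_def)
    then show ?thesis using p(1) pmf_weighted_sum_diff_const[OF assms(1) p(1)] by auto
  qed
qed

section \<open>Expected payoffs\<close>

lemma expectation_pair_pmf_finite:
  fixes g :: "'a \<Rightarrow> 'b \<Rightarrow> real"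
  assumes "finite X" "finite Y" "set_pmf p \<subseteq> X" "set_pmf q \<subseteq> Y"
  shows "measure_pmf.expectation (pair_pmf p q) (\<lambda>(x, y). g x y)
       = (\<Sum>x\<in>X. \<Sum>y\<in>Y. pmf p x * pmf q y * g x y)"
proof -
  have "measure_pmf.expectation (pair_pmf p q) (\<lambda>(x, y). g x y)
      = (\<Sum>z\<in>X \<times> Y. (\<lambda>(x, y). g x y) z * pmf (pair_pmf p q) z)"
    using assms by (intro integral_measure_pmf_real) auto
  also have "\<dots> = (\<Sum>(x, y)\<in>X \<times> Y. pmf p x * pmf q y * g x y)"
    by (rule sum.cong) (auto simp: pmf_pair)
  finally show ?thesis by (simp add: sum.cartesian_product)
qed

lemma pmf_weighted_sum_le:
  fixes g :: "'a \<Rightarrow> real"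
  assumes "finite X" "set_pmf \<sigma> \<subseteq> X" "\<And>x. x \<in> set_pmf \<sigma> \<Longrightarrow> g x \<le> a"
  shows "(\<Sum>x\<in>X. pmf \<sigma> x * g x) \<le> a"
proof -
  have "(\<Sum>x\<in>X. pmf \<sigma> x * g x) \<le> (\<Sum>x\<in>X. pmf \<sigma> x * a)"
    using assms(3) by (intro sum_mono) (metis mult_left_mono pmf_nonneg pmf_eq_0_set_pmf mult_zero_left order_refl)
  also have "\<dots> = a" using sum_pmf_eq_1[OF assms(1,2)] by (simp add: sum_distrib_right[symmetric])
  finally show ?thesis .
qed

lemma pmf_weighted_sum_ge:
  fixes g :: "'a \<Rightarrow> real"
  assumes "finite X" "set_pmf \<sigma> \<subseteq> X" "\<And>x. x \<in> set_pmf \<sigma> \<Longrightarrow> a \<le> g x"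
  shows "a \<le> (\<Sum>x\<in>X. pmf \<sigma> x * g x)"
  using pmf_weighted_sum_le[OF assms(1,2), of "\<lambda>x. - g x" "- a"] assms(3)
  by (simp add: sum_negf)

lemma pmf_weighted_sum_attained_on_support:
  fixes g :: "'a \<Rightarrow> real"
  assumes "finite X" "set_pmf \<sigma> \<subseteq> X" "\<forall>x\<in>X. g x \<le> (\<Sum>y\<in>X. pmf \<sigma> y * g y)" "x \<in> set_pmf \<sigma>"
  shows "g x = (\<Sum>y\<in>X. pmf \<sigma> y * g y)"
proof -
  define m where "m = (\<Sum>y\<in>X. pmf \<sigma> y * g y)"
  have "(\<Sum>y\<in>X. pmf \<sigma> y * (m - g y)) = m * (\<Sum>y\<in>X. pmf \<sigma> y) - m"
    unfolding m_def by (simp add: right_diff_distrib sum_subtractf sum_distrib_right mult_ac)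
  also have "\<dots> = 0" using sum_pmf_eq_1[OF assms(1,2)] by simp
  finally have "pmf \<sigma> x * (m - g x) = 0"
    using assms by (subst (asm) sum_nonneg_eq_0_iff) (auto simp: m_def)
  then show ?thesis using assms(4) unfolding m_def by (auto simp: set_pmf_iff)
qed

lemma U1_eq_sum:
  assumes "finite SA" "finite TA" "set_pmf \<sigma>1 \<subseteq> SA" "set_pmf \<sigma>2 \<subseteq> TA"
  shows "U1 C \<sigma>1 \<sigma>2 = (\<Sum>S\<in>SA. \<Sum>T\<in>TA. pmf \<sigma>1 S * pmf \<sigma>2 T * real (F C S T))"
  unfolding U1_def by (rule expectation_pair_pmf_finite[OF assms])

lemma U2_eq_sum:
  assumes "finite SA" "finite TA" "set_pmf \<sigma>1 \<subseteq> SA" "set_pmf \<sigma>2 \<subseteq> TA"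
  shows "U2 C \<sigma>1 \<sigma>2 = (\<Sum>S\<in>SA. \<Sum>T\<in>TA. pmf \<sigma>1 S * pmf \<sigma>2 T * (real (card T) - real (F C S T)))"
  unfolding U2_def by (rule expectation_pair_pmf_finite[OF assms])

lemma U1_return_left:
  assumes "finite TA" "set_pmf \<sigma>2 \<subseteq> TA"
  shows "U1 C (return_pmf S) \<sigma>2 = (\<Sum>T\<in>TA. pmf \<sigma>2 T * real (F C S T))"
  using U1_eq_sum[of "{S}" TA "return_pmf S" \<sigma>2 C] assms by simp

lemma U1_return_right:
  assumes "finite SA" "set_pmf \<sigma>1 \<subseteq> SA"
  shows "U1 C \<sigma>1 (return_pmf T) = (\<Sum>S\<in>SA. pmf \<sigma>1 S * real (F C S T))"
  using U1_eq_sum[of SA "{T}" \<sigma>1 "return_pmf T" C] assms by simp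

lemma U1_average_left:
  assumes "finite SA" "finite TA" "set_pmf \<sigma>1 \<subseteq> SA" "set_pmf \<sigma>2 \<subseteq> TA"
  shows "U1 C \<sigma>1 \<sigma>2 = (\<Sum>S\<in>SA. pmf \<sigma>1 S * U1 C (return_pmf S) \<sigma>2)"
  unfolding U1_eq_sum[OF assms] U1_return_left[OF assms(2,4)]
  by (simp add: sum_distrib_left mult_ac)

lemma U1_average_right:
  assumes "finite SA" "finite TA" "set_pmf \<sigma>1 \<subseteq> SA" "set_pmf \<sigma>2 \<subseteq> TA"
  shows "U1 C \<sigma>1 \<sigma>2 = (\<Sum>T\<in>TA. pmf \<sigma>2 T * U1 C \<sigma>1 (return_pmf T))"
  unfolding U1_eq_sum[OF assms] U1_return_right[OF assms(1,3)]
  by (subst sum.swap) (simp add: sum_distrib_left mult_ac)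

lemma U2_average_right:
  assumes "finite SA" "finite TA" "set_pmf \<sigma>1 \<subseteq> SA" "set_pmf \<sigma>2 \<subseteq> TA"
  shows "U2 C \<sigma>1 \<sigma>2 = (\<Sum>T\<in>TA. pmf \<sigma>2 T * U2 C \<sigma>1 (return_pmf T))"
proof -
  have "U2 C \<sigma>1 (return_pmf T) = (\<Sum>S\<in>SA. pmf \<sigma>1 S * (real (card T) - real (F C S T)))" for T
    using U2_eq_sum[of SA "{T}" \<sigma>1 "return_pmf T" C] assms by simp
  then show ?thesis
    unfolding U2_eq_sum[OF assms] by (subst sum.swap) (simp add: sum_distrib_left mult_ac)
qed

lemma U2_eq_expected_card_minus_U1:
  assumes "finite SA" "finite TA" "set_pmf \<sigma>1 \<subseteq> SA" "set_pmf \<sigma>2 \<subseteq> TA"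
  shows "U2 C \<sigma>1 \<sigma>2 = (\<Sum>T\<in>TA. pmf \<sigma>2 T * real (card T)) - U1 C \<sigma>1 \<sigma>2"
proof -
  have "U2 C \<sigma>1 \<sigma>2 = (\<Sum>S\<in>SA. pmf \<sigma>1 S) * (\<Sum>T\<in>TA. pmf \<sigma>2 T * real (card T)) - U1 C \<sigma>1 \<sigma>2"
    unfolding U2_eq_sum[OF assms] U1_eq_sum[OF assms] sum_product
    by (simp add: right_diff_distrib sum_subtractf mult_ac)
  then show ?thesis using sum_pmf_eq_1[OF assms(1,3)] by simp
qed

section \<open>The detection game\<close>

lemma n_star_le_card:
  assumes "finite V" "set_cover V E C S"
  shows "n_star V E C \<le> card S"
proof -
  have "{card S |S. set_cover V E C S} \<subseteq> {..card V}"
    using assms(1) by (auto simp: set_cover_def intro: card_mono)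
  then have "finite {card S |S. set_cover V E C S}" by (rule finite_subset) simp
  then show ?thesis unfolding n_star_def using assms(2) by (intro Min_le) auto
qed

lemma m_star_attained:
  assumes "finite E"
  obtains P where "set_packing V E C P" "card P = m_star V E C"
proof -
  have "{card T |T. set_packing V E C T} \<subseteq> {..card E}"
    using assms by (auto simp: set_packing_def intro: card_mono)
  then have "finite {card T |T. set_packing V E C T}" by (rule finite_subset) simp
  moreover have "set_packing V E C {}" unfolding set_packing_def by simp
  ultimately have "m_star V E C \<in> {card T |T. set_packing V E C T}"
    unfolding m_star_def by (intro Max_in) auto
  then obtain P where "set_packing V E C P" "m_star V E C = card P" by auto
  then show ?thesis using that by simp
qed

lemma set_packing_card_le:
  assumes "set_packing V E C P" "S \<subseteq> V" "finite S" "finite E"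
  shows "card P \<le> card S + card (E - CS C S)"
proof -
  have "P \<subseteq> (\<Union>j\<in>S. C j \<inter> P) \<union> (E - CS C S)"
    using assms(1) unfolding set_packing_def CS_def by auto
  then have "card P \<le> card ((\<Union>j\<in>S. C j \<inter> P) \<union> (E - CS C S))"
    using assms(1,4) unfolding set_packing_def by (intro card_mono) (auto intro: finite_subset)
  also have "\<dots> \<le> card (\<Union>j\<in>S. C j \<inter> P) + card (E - CS C S)" by (rule card_Un_le)
  also have "card (\<Union>j\<in>S. C j \<inter> P) \<le> (\<Sum>j\<in>S. card (C j \<inter> P))" by (rule card_UN_le[OF assms(3)])
  also have "\<dots> \<le> (\<Sum>j\<in>S. 1)" using assms(1,2) unfolding set_packing_def by (intro sum_mono) auto
  finally show ?thesis by simp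
qed

lemma exists_superset_with_card:
  assumes "finite U" "X \<subseteq> U" "card X \<le> b" "b \<le> card U"
  obtains Y where "X \<subseteq> Y" "Y \<subseteq> U" "card Y = b"
proof -
  have "finite X" using assms(2,1) by (rule finite_subset)
  have "b - card X \<le> card (U - X)" using assms \<open>finite X\<close> by (simp add: card_Diff_subset)
  then obtain D where D: "D \<subseteq> U - X" "card D = b - card X" "finite D" by (rule obtain_subset_with_card_n)
  have "card (X \<union> D) = b" using D \<open>finite X\<close> assms(3) by (subst card_Un_disjoint) auto
  then show ?thesis using that[of "X \<union> D"] D assms(2) by auto
qed

lemma real_card_Int_eq_sum: "finite T \<Longrightarrow> real (card (X \<inter> T)) = (\<Sum>e\<in>T. of_bool (e \<in> X))"
  by (simp add: sum.If_cases Int_commute)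

locale detection_game =
  fixes V :: "'v set" and E :: "'e set" and C :: "'v \<Rightarrow> 'e set" and b1 b2 :: nat
  assumes finite_V: "finite V" and finite_E: "finite E"
    and C_subset: "\<And>i. i \<in> V \<Longrightarrow> C i \<subseteq> E"
    and C_covers: "\<And>e. e \<in> E \<Longrightarrow> \<exists>i\<in>V. e \<in> C i"
    and b2_pos: "0 < b2"
    and b1_less_n_star: "b1 < n_star V E C"
    and b2_less_m_star: "b2 < m_star V E C"
begin

lemma finite_A1: "finite (A1 V b1)"
  unfolding A1_def using finite_V by (auto intro: finite_subset[of _ "Pow V"])

lemma finite_A2: "finite (A2 E b2)"
  unfolding A2_def using finite_E by (auto intro: finite_subset[of _ "Pow E"])

lemma A1bar_subset: "A1bar V b1 \<subseteq> A1 V b1"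
  unfolding A1bar_def A1_def by auto

lemma A2bar_subset: "A2bar E b2 \<subseteq> A2 E b2"
  unfolding A2bar_def A2_def by auto

lemma finite_A1bar: "finite (A1bar V b1)"
  using finite_A1 A1bar_subset by (rule finite_subset[rotated])

lemma finite_A2bar: "finite (A2bar E b2)"
  using finite_A2 A2bar_subset by (rule finite_subset[rotated])

lemma finite_CS: "S \<subseteq> V \<Longrightarrow> finite (CS C S)"
  unfolding CS_def using finite_E C_subset by (auto intro: finite_subset)

lemma CS_subset: "S \<subseteq> V \<Longrightarrow> CS C S \<subseteq> E"
  unfolding CS_def using C_subset by auto

lemma A1_extends_to_A1bar:
  assumes "S \<in> A1 V b1"
  obtains S' where "S \<subseteq> S'" "S' \<in> A1bar V b1"
proof -
  have "set_cover V E C V" unfolding set_cover_def CS_def using C_subset C_covers by auto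
  then have "b1 \<le> card V" using n_star_le_card[OF finite_V] b1_less_n_star by fastforce
  then obtain S' where "S \<subseteq> S'" "S' \<subseteq> V" "card S' = b1"
    using exists_superset_with_card[OF finite_V, of S b1] assms unfolding A1_def by auto
  then show ?thesis using that unfolding A1bar_def by blast
qed

lemma A2_extends_to_A2bar:
  assumes "T \<in> A2 E b2"
  obtains T' where "T \<subseteq> T'" "T' \<in> A2bar E b2"
proof -
  obtain P where P: "set_packing V E C P" "card P = m_star V E C" using m_star_attained[OF finite_E] .
  then have "card P \<le> card E" using card_mono[OF finite_E] unfolding set_packing_def by blast
  then have "b2 \<le> card E" using P(2) b2_less_m_star by linarith
  then obtain T' where "T \<subseteq> T'" "T' \<subseteq> E" "card T' = b2"
    using exists_superset_with_card[OF finite_E, of T b2] assms unfolding A2_def by auto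
  then show ?thesis using that unfolding A2bar_def by blast
qed

lemma A1bar_nonempty: "A1bar V b1 \<noteq> {}"
  using A1_extends_to_A1bar[of "{}"] unfolding A1_def by auto

lemma A2bar_nonempty: "A2bar E b2 \<noteq> {}"
  using A2_extends_to_A2bar[of "{}"] unfolding A2_def by auto

text \<open>The sums range over $\mathcal A_1$ and $\mathcal A_2$, so they are probabilities only for
  strategies supported there.\<close>

definition hit_prob :: "'v set pmf \<Rightarrow> 'e \<Rightarrow> real" where
  "hit_prob \<sigma>1 e = (\<Sum>S\<in>A1 V b1. pmf \<sigma>1 S * of_bool (e \<in> CS C S))"

definition pick_prob :: "'e set pmf \<Rightarrow> 'e \<Rightarrow> real" where
  "pick_prob \<sigma>2 e = (\<Sum>T\<in>A2 E b2. pmf \<sigma>2 T * of_bool (e \<in> T))"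

lemma hit_prob_le_1: "set_pmf \<sigma>1 \<subseteq> A1 V b1 \<Longrightarrow> hit_prob \<sigma>1 e \<le> 1"
  unfolding hit_prob_def by (rule pmf_weighted_sum_le[OF finite_A1]) auto

lemma hit_prob_less_1:
  assumes "set_pmf \<sigma>1 \<subseteq> A1 V b1" "S \<in> set_pmf \<sigma>1" "e \<notin> CS C S"
  shows "hit_prob \<sigma>1 e < 1"
proof -
  have "0 < pmf \<sigma>1 S * (1 - of_bool (e \<in> CS C S))" using assms(2,3) by (simp add: pmf_positive)
  also have "\<dots> \<le> (\<Sum>S'\<in>A1 V b1. pmf \<sigma>1 S' * (1 - of_bool (e \<in> CS C S')))"
    using assms(1,2) by (intro member_le_sum finite_A1) auto
  also have "\<dots> = 1 - hit_prob \<sigma>1 e"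
    using sum_pmf_eq_1[OF finite_A1 assms(1)]
    by (simp add: hit_prob_def right_diff_distrib sum_subtractf)
  finally show ?thesis by simp
qed

lemma pick_prob_nonneg: "0 \<le> pick_prob \<sigma>2 e"
  unfolding pick_prob_def by (intro sum_nonneg) simp

lemma pick_prob_eq_1:
  assumes "set_pmf \<sigma>2 \<subseteq> A2 E b2" "\<And>T. T \<in> set_pmf \<sigma>2 \<Longrightarrow> e \<in> T"
  shows "pick_prob \<sigma>2 e = 1"
proof -
  have "pick_prob \<sigma>2 e = (\<Sum>T\<in>A2 E b2. pmf \<sigma>2 T)"
    unfolding pick_prob_def using assms(2) by (intro sum.cong) (auto simp: set_pmf_iff)
  then show ?thesis using sum_pmf_eq_1[OF finite_A2 assms(1)] by simp
qed

lemma sum_pick_prob_le: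
  assumes "set_pmf \<sigma>2 \<subseteq> A2 E b2"
  shows "(\<Sum>e\<in>E. pick_prob \<sigma>2 e) \<le> real b2"
proof -
  have "(\<Sum>e\<in>E. pick_prob \<sigma>2 e) = (\<Sum>T\<in>A2 E b2. pmf \<sigma>2 T * real (card T))"
    unfolding pick_prob_def
    by (subst sum.swap) (auto simp: A2_def sum_distrib_left[symmetric] real_card_Int_eq_sum[OF finite_E, symmetric] Int_absorb2 intro!: sum.cong)
  also have "\<dots> \<le> real b2"
    using assms by (intro pmf_weighted_sum_le[OF finite_A2]) (auto simp: A2_def)
  finally show ?thesis .
qed

lemma U1_return_left_eq_sum_pick_prob:
  assumes "set_pmf \<sigma>2 \<subseteq> A2 E b2" "S \<subseteq> V"
  shows "U1 C (return_pmf S) \<sigma>2 = (\<Sum>e\<in>CS C S. pick_prob \<sigma>2 e)"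
  unfolding U1_return_left[OF finite_A2 assms(1)] pick_prob_def F_def
    Int_commute[of "CS C S"] real_card_Int_eq_sum[OF finite_CS[OF assms(2)]]
  by (subst sum.swap) (simp add: sum_distrib_left)

lemma U2_return_right_eq_sum_hit_prob:
  assumes "set_pmf \<sigma>1 \<subseteq> A1 V b1" "finite T"
  shows "U2 C \<sigma>1 (return_pmf T) = (\<Sum>e\<in>T. 1 - hit_prob \<sigma>1 e)"
proof -
  have "U2 C \<sigma>1 (return_pmf T) = real (card T) - U1 C \<sigma>1 (return_pmf T)"
    using U2_eq_expected_card_minus_U1[OF finite_A1 _ assms(1), of "{T}"] by simp
  also have "U1 C \<sigma>1 (return_pmf T) = (\<Sum>e\<in>T. hit_prob \<sigma>1 e)"
    unfolding U1_return_right[OF finite_A1 assms(1)] hit_prob_def F_def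
      real_card_Int_eq_sum[OF assms(2)]
    by (subst sum.swap) (simp add: sum_distrib_left)
  finally show ?thesis by (simp add: sum_subtractf)
qed

lemma U2_eq_sum_pick_prob_minus_U1:
  assumes "set_pmf \<sigma>1 \<subseteq> A1 V b1" "set_pmf \<sigma>2 \<subseteq> A2 E b2"
  shows "U2 C \<sigma>1 \<sigma>2 = (\<Sum>e\<in>E. pick_prob \<sigma>2 e) - U1 C \<sigma>1 \<sigma>2"
proof -
  have "(\<Sum>e\<in>E. pick_prob \<sigma>2 e) = (\<Sum>T\<in>A2 E b2. pmf \<sigma>2 T * real (card T))"
    unfolding pick_prob_def
    by (subst sum.swap) (auto simp: A2_def sum_distrib_left[symmetric]
        real_card_Int_eq_sum[OF finite_E, symmetric] Int_absorb2 intro!: sum.cong)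
  then show ?thesis using U2_eq_expected_card_minus_U1[OF finite_A1 finite_A2 assms] by simp
qed

lemma U1_return_left_mono:
  assumes "set_pmf \<sigma>2 \<subseteq> A2 E b2" "S \<subseteq> S'" "S' \<subseteq> V"
  shows "U1 C (return_pmf S) \<sigma>2 \<le> U1 C (return_pmf S') \<sigma>2"
proof -
  have "CS C S \<subseteq> CS C S'" using assms(2) unfolding CS_def by auto
  then show ?thesis
    using assms finite_CS[OF assms(3)] pick_prob_nonneg
    by (simp add: U1_return_left_eq_sum_pick_prob sum_mono2)
qed

lemma U2_return_right_mono:
  assumes "set_pmf \<sigma>1 \<subseteq> A1 V b1" "T \<subseteq> T'" "finite T'"
  shows "U2 C \<sigma>1 (return_pmf T) \<le> U2 C \<sigma>1 (return_pmf T')"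
  using assms hit_prob_le_1[OF assms(1)] finite_subset[OF assms(2,3)]
  by (simp add: U2_return_right_eq_sum_hit_prob sum_mono2)

lemma U2_return_right_insert:
  assumes "set_pmf \<sigma>1 \<subseteq> A1 V b1" "finite T" "x \<notin> T"
  shows "U2 C \<sigma>1 (return_pmf (insert x T)) = (1 - hit_prob \<sigma>1 x) + U2 C \<sigma>1 (return_pmf T)"
  using assms by (simp add: U2_return_right_eq_sum_hit_prob)

lemma U2_full_budget:
  assumes "set_pmf \<sigma>1 \<subseteq> A1 V b1" "set_pmf \<sigma>2 \<subseteq> A2bar E b2"
  shows "U2 C \<sigma>1 \<sigma>2 = real b2 - U1 C \<sigma>1 \<sigma>2"
proof -
  have "(\<Sum>T\<in>A2bar E b2. pmf \<sigma>2 T * real (card T)) = (\<Sum>T\<in>A2bar E b2. pmf \<sigma>2 T * real b2)"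
    unfolding A2bar_def by (intro sum.cong) auto
  also have "\<dots> = real b2"
    using sum_pmf_eq_1[OF finite_A2bar assms(2)] by (simp add: sum_distrib_right[symmetric])
  finally show ?thesis using U2_eq_expected_card_minus_U1[OF finite_A1 finite_A2bar assms] by simp
qed

section \<open>Security levels and the minimax inequality\<close>

definition security_level :: "'v set pmf \<Rightarrow> real" where
  "security_level \<tau>1 = Min ((\<lambda>T. U1 C \<tau>1 (return_pmf T)) ` A2bar E b2)"

definition best_response_value :: "'e set pmf \<Rightarrow> real" where
  "best_response_value \<tau>2 = Max ((\<lambda>S. U1 C (return_pmf S) \<tau>2) ` A1bar V b1)"

lemma maxmin_opt_iff:
  "maxmin_opt V E C b1 b2 \<sigma>1 \<longleftrightarrow> set_pmf \<sigma>1 \<subseteq> A1bar V b1 \<and>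
     (\<forall>\<tau>1. set_pmf \<tau>1 \<subseteq> A1bar V b1 \<longrightarrow> security_level \<tau>1 \<le> security_level \<sigma>1)"
  unfolding maxmin_opt_def security_level_def ..

lemma minmax_opt_iff:
  "minmax_opt V E C b1 b2 \<sigma>2 \<longleftrightarrow> set_pmf \<sigma>2 \<subseteq> A2bar E b2 \<and>
     (\<forall>\<tau>2. set_pmf \<tau>2 \<subseteq> A2bar E b2 \<longrightarrow> best_response_value \<sigma>2 \<le> best_response_value \<tau>2)"
  unfolding minmax_opt_def best_response_value_def ..

lemma security_level_ge_iff:
  "c \<le> security_level \<tau>1 \<longleftrightarrow> (\<forall>T\<in>A2bar E b2. c \<le> U1 C \<tau>1 (return_pmf T))"
  unfolding security_level_def using finite_A2bar A2bar_nonempty by (simp add: Min_ge_iff)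

lemma security_level_gt_iff:
  "c < security_level \<tau>1 \<longleftrightarrow> (\<forall>T\<in>A2bar E b2. c < U1 C \<tau>1 (return_pmf T))"
  unfolding security_level_def using finite_A2bar A2bar_nonempty by (simp add: Min_gr_iff)

lemma best_response_value_le_iff:
  "best_response_value \<tau>2 \<le> c \<longleftrightarrow> (\<forall>S\<in>A1bar V b1. U1 C (return_pmf S) \<tau>2 \<le> c)"
  unfolding best_response_value_def using finite_A1bar A1bar_nonempty by (simp add: Max_le_iff)

lemma security_level_le: "T \<in> A2bar E b2 \<Longrightarrow> security_level \<tau>1 \<le> U1 C \<tau>1 (return_pmf T)"
  using security_level_ge_iff[of "security_level \<tau>1" \<tau>1] by blast

lemma best_response_value_ge: "S \<in> A1bar V b1 \<Longrightarrow> U1 C (return_pmf S) \<tau>2 \<le> best_response_value \<tau>2"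
  using best_response_value_le_iff[of \<tau>2 "best_response_value \<tau>2"] by blast

lemma security_level_le_U1:
  assumes "set_pmf \<tau>1 \<subseteq> A1 V b1" "set_pmf \<sigma>2 \<subseteq> A2bar E b2"
  shows "security_level \<tau>1 \<le> U1 C \<tau>1 \<sigma>2"
proof -
  have "security_level \<tau>1 \<le> (\<Sum>T\<in>A2bar E b2. pmf \<sigma>2 T * U1 C \<tau>1 (return_pmf T))"
    using assms(2) security_level_le by (intro pmf_weighted_sum_ge[OF finite_A2bar]) auto
  also have "\<dots> = U1 C \<tau>1 \<sigma>2" by (rule U1_average_right[OF finite_A1 finite_A2bar assms, symmetric])
  finally show ?thesis .
qed

text \<open>Enlarging a placement to the full budget can only increase detection, so pure strategies
  in $\mathcal A_1$ do no better than those in $\overline{\mathcal A_1}$.\<close>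

lemma U1_le_best_response_value:
  assumes "set_pmf \<tau>1 \<subseteq> A1 V b1" "set_pmf \<sigma>2 \<subseteq> A2 E b2"
  shows "U1 C \<tau>1 \<sigma>2 \<le> best_response_value \<sigma>2"
proof -
  have "U1 C (return_pmf S) \<sigma>2 \<le> best_response_value \<sigma>2" if S: "S \<in> A1 V b1" for S
  proof -
    obtain S' where S': "S \<subseteq> S'" "S' \<in> A1bar V b1" using A1_extends_to_A1bar[OF S] .
    then have "U1 C (return_pmf S) \<sigma>2 \<le> U1 C (return_pmf S') \<sigma>2"
      using assms(2) by (intro U1_return_left_mono) (auto simp: A1bar_def)
    also have "\<dots> \<le> best_response_value \<sigma>2"
      using S'(2) by (rule best_response_value_ge)
    finally show ?thesis .
  qed
  then have "(\<Sum>S\<in>A1 V b1. pmf \<tau>1 S * U1 C (return_pmf S) \<sigma>2) \<le> best_response_value \<sigma>2"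
    using assms(1) by (intro pmf_weighted_sum_le[OF finite_A1]) auto
  then show ?thesis by (simp add: U1_average_left[OF finite_A1 finite_A2 assms])
qed

lemma U2_le_budget_minus_security_level:
  assumes "set_pmf \<sigma>1 \<subseteq> A1 V b1" "set_pmf \<tau>2 \<subseteq> A2 E b2"
  shows "U2 C \<sigma>1 \<tau>2 \<le> real b2 - security_level \<sigma>1"
proof -
  have "U2 C \<sigma>1 (return_pmf T) \<le> real b2 - security_level \<sigma>1" if T: "T \<in> A2 E b2" for T
  proof -
    obtain T' where T': "T \<subseteq> T'" "T' \<in> A2bar E b2" using A2_extends_to_A2bar[OF T] .
    then have "finite T'" unfolding A2bar_def using finite_E by (auto intro: finite_subset)
    then have "U2 C \<sigma>1 (return_pmf T) \<le> U2 C \<sigma>1 (return_pmf T')"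
      using assms(1) T'(1) by (rule U2_return_right_mono[rotated 2])
    also have "\<dots> = real b2 - U1 C \<sigma>1 (return_pmf T')"
      using T'(2) by (intro U2_full_budget[OF assms(1)]) simp
    also have "\<dots> \<le> real b2 - security_level \<sigma>1"
      using T'(2) security_level_le by simp
    finally show ?thesis .
  qed
  then have "(\<Sum>T\<in>A2 E b2. pmf \<tau>2 T * U2 C \<sigma>1 (return_pmf T)) \<le> real b2 - security_level \<sigma>1"
    using assms(2) by (intro pmf_weighted_sum_le[OF finite_A2]) auto
  then show ?thesis by (simp add: U2_average_right[OF finite_A1 finite_A2 assms])
qed

lemma best_response_value_le_security_level:
  assumes "maxmin_opt V E C b1 b2 \<sigma>1" "minmax_opt V E C b1 b2 \<sigma>2"
  shows "best_response_value \<sigma>2 \<le> security_level \<sigma>1"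
  using ville_alternative_pmf[OF finite_A1bar finite_A2bar A2bar_nonempty,
      of "\<lambda>S T. real (F C S T)" "security_level \<sigma>1"]
proof (elim disjE exE conjE)
  fix \<tau>2 assume \<tau>2: "set_pmf \<tau>2 \<subseteq> A2bar E b2"
    "\<forall>S\<in>A1bar V b1. (\<Sum>T\<in>A2bar E b2. pmf \<tau>2 T * real (F C S T)) \<le> security_level \<sigma>1"
  have "best_response_value \<tau>2 \<le> security_level \<sigma>1"
    using \<tau>2 by (simp add: best_response_value_le_iff U1_return_left[OF finite_A2bar])
  moreover have "best_response_value \<sigma>2 \<le> best_response_value \<tau>2"
    using assms(2) \<tau>2(1) unfolding minmax_opt_iff by blast
  ultimately show ?thesis by linarith
next
  fix \<tau>1 assume \<tau>1: "set_pmf \<tau>1 \<subseteq> A1bar V b1"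
    "\<forall>T\<in>A2bar E b2. security_level \<sigma>1 < (\<Sum>S\<in>A1bar V b1. pmf \<tau>1 S * real (F C S T))"
  have "security_level \<sigma>1 < security_level \<tau>1"
    using \<tau>1 by (simp add: security_level_gt_iff U1_return_right[OF finite_A1bar])
  moreover have "security_level \<tau>1 \<le> security_level \<sigma>1"
    using assms(1) \<tau>1(1) unfolding maxmin_opt_iff by blast
  ultimately show ?thesis by linarith
qed

lemma nash_if_optimal:
  assumes "maxmin_opt V E C b1 b2 \<sigma>1" "minmax_opt V E C b1 b2 \<sigma>2"
  shows "nash V E C b1 b2 \<sigma>1 \<sigma>2"
proof -
  have s1: "set_pmf \<sigma>1 \<subseteq> A1bar V b1" and s2: "set_pmf \<sigma>2 \<subseteq> A2bar E b2"
    using assms unfolding maxmin_opt_iff minmax_opt_iff by blast+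
  then have s1': "set_pmf \<sigma>1 \<subseteq> A1 V b1" and s2': "set_pmf \<sigma>2 \<subseteq> A2 E b2"
    using A1bar_subset A2bar_subset by blast+
  have gap: "best_response_value \<sigma>2 \<le> security_level \<sigma>1"
    by (rule best_response_value_le_security_level[OF assms])
  have lower: "security_level \<sigma>1 \<le> U1 C \<sigma>1 \<sigma>2" by (rule security_level_le_U1[OF s1' s2])
  have upper: "U1 C \<sigma>1 \<sigma>2 \<le> best_response_value \<sigma>2" by (rule U1_le_best_response_value[OF s1' s2'])
  have "U1 C \<tau>1 \<sigma>2 \<le> U1 C \<sigma>1 \<sigma>2" if "set_pmf \<tau>1 \<subseteq> A1 V b1" for \<tau>1
    using U1_le_best_response_value[OF that s2'] gap lower by linarith
  moreover have "U2 C \<sigma>1 \<tau>2 \<le> U2 C \<sigma>1 \<sigma>2" if "set_pmf \<tau>2 \<subseteq> A2 E b2" for \<tau>2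
    using U2_le_budget_minus_security_level[OF s1' that] U2_full_budget[OF s1' s2] gap upper
    by linarith
  ultimately show ?thesis unfolding nash_def using s1' s2' by blast
qed

end

section \<open>Equilibria use the full budgets\<close>

locale detection_equilibrium = detection_game +
  fixes \<sigma>1 \<sigma>2
  assumes nash: "nash V E C b1 b2 \<sigma>1 \<sigma>2"
begin

lemma support1: "set_pmf \<sigma>1 \<subseteq> A1 V b1"
  using nash unfolding nash_def by blast

lemma support2: "set_pmf \<sigma>2 \<subseteq> A2 E b2"
  using nash unfolding nash_def by blast

lemma U1_best_response: "set_pmf \<tau>1 \<subseteq> A1 V b1 \<Longrightarrow> U1 C \<tau>1 \<sigma>2 \<le> U1 C \<sigma>1 \<sigma>2"
  using nash unfolding nash_def by blast

lemma U2_best_response: "set_pmf \<tau>2 \<subseteq> A2 E b2 \<Longrightarrow> U2 C \<sigma>1 \<tau>2 \<le> U2 C \<sigma>1 \<sigma>2"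
  using nash unfolding nash_def by blast

lemma U1_return_on_support:
  assumes "S \<in> set_pmf \<sigma>1"
  shows "U1 C (return_pmf S) \<sigma>2 = U1 C \<sigma>1 \<sigma>2"
  unfolding U1_average_left[OF finite_A1 finite_A2 support1 support2]
  using U1_best_response U1_average_left[OF finite_A1 finite_A2 support1 support2]
  by (intro pmf_weighted_sum_attained_on_support[OF finite_A1 support1 _ assms]) auto

lemma U2_return_on_support:
  assumes "T \<in> set_pmf \<sigma>2"
  shows "U2 C \<sigma>1 (return_pmf T) = U2 C \<sigma>1 \<sigma>2"
  unfolding U2_average_right[OF finite_A1 finite_A2 support1 support2]
  using U2_best_response U2_average_right[OF finite_A1 finite_A2 support1 support2]
  by (intro pmf_weighted_sum_attained_on_support[OF finite_A2 support2 _ assms]) auto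

lemma pick_prob_eq_0_off_short_placement:
  assumes S: "S \<in> set_pmf \<sigma>1" "card S < b1" and e: "e \<in> E - CS C S"
  shows "pick_prob \<sigma>2 e = 0"
proof -
  have "S \<subseteq> V" using S support1 unfolding A1_def by auto
  then have "finite S" using finite_V by (rule finite_subset)
  obtain i where i: "i \<in> V" "e \<in> C i" using C_covers e by blast
  have "set_pmf (return_pmf (insert i S)) \<subseteq> A1 V b1"
    using \<open>S \<subseteq> V\<close> S(2) \<open>finite S\<close> i unfolding A1_def by (auto simp: card_insert_if)
  have "pick_prob \<sigma>2 e + (\<Sum>e\<in>CS C S. pick_prob \<sigma>2 e) = (\<Sum>e\<in>insert e (CS C S). pick_prob \<sigma>2 e)"
    using e finite_CS[OF \<open>S \<subseteq> V\<close>] by simp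
  also have "\<dots> \<le> (\<Sum>e\<in>CS C (insert i S). pick_prob \<sigma>2 e)"
    using i \<open>S \<subseteq> V\<close> finite_CS[of "insert i S"] pick_prob_nonneg
    by (intro sum_mono2) (auto simp: CS_def)
  also have "\<dots> = U1 C (return_pmf (insert i S)) \<sigma>2"
    using i \<open>S \<subseteq> V\<close> by (simp add: U1_return_left_eq_sum_pick_prob support2)
  also have "\<dots> \<le> U1 C (return_pmf S) \<sigma>2"
    unfolding U1_return_on_support[OF S(1)] by (rule U1_best_response) fact
  also have "\<dots> = (\<Sum>e\<in>CS C S. pick_prob \<sigma>2 e)"
    using \<open>S \<subseteq> V\<close> by (simp add: U1_return_left_eq_sum_pick_prob support2)
  finally show ?thesis using pick_prob_nonneg[of \<sigma>2 e] by linarith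
qed

text \<open>A short placement in the support lets player 1 add a sensor at no gain, so player 2
  attacks only monitored elements and earns nothing; then every element must be monitored
  surely, and the short placement is a set cover.\<close>

lemma placement_full_budget:
  assumes S: "S \<in> set_pmf \<sigma>1"
  shows "card S = b1"
proof (rule ccontr)
  assume "card S \<noteq> b1"
  moreover have "S \<subseteq> V" "card S \<le> b1" using S support1 unfolding A1_def by auto
  ultimately have "card S < b1" by simp
  then have "(\<Sum>e\<in>CS C S. pick_prob \<sigma>2 e) = (\<Sum>e\<in>E. pick_prob \<sigma>2 e)"
    using CS_subset[OF \<open>S \<subseteq> V\<close>] finite_E pick_prob_eq_0_off_short_placement[OF S]
    by (intro sum.mono_neutral_left) auto
  then have "U1 C \<sigma>1 \<sigma>2 = (\<Sum>e\<in>E. pick_prob \<sigma>2 e)"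
    using U1_return_on_support[OF S] U1_return_left_eq_sum_pick_prob[OF support2 \<open>S \<subseteq> V\<close>]
    by simp
  then have U2_zero: "U2 C \<sigma>1 \<sigma>2 = 0"
    by (simp add: U2_eq_sum_pick_prob_minus_U1 support1 support2)
  have "E \<subseteq> CS C S"
  proof
    fix e assume "e \<in> E"
    show "e \<in> CS C S"
    proof (rule ccontr)
      assume "e \<notin> CS C S"
      then have "0 < U2 C \<sigma>1 (return_pmf {e})"
        using hit_prob_less_1[OF support1 S] by (simp add: U2_return_right_eq_sum_hit_prob support1)
      moreover have "{e} \<in> A2 E b2" using \<open>e \<in> E\<close> b2_pos unfolding A2_def by simp
      ultimately show False using U2_best_response[of "return_pmf {e}"] U2_zero by simp
    qed
  qed
  then have "set_cover V E C S" unfolding set_cover_def using CS_subset \<open>S \<subseteq> V\<close> by blast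
  then show False using n_star_le_card[OF finite_V] \<open>card S < b1\<close> b1_less_n_star by fastforce
qed

lemma hit_prob_eq_1_off_short_target:
  assumes T0: "T0 \<in> set_pmf \<sigma>2" "card T0 < b2" and e: "e \<in> E" "e \<notin> T0"
  shows "hit_prob \<sigma>1 e = 1"
proof -
  have "T0 \<subseteq> E" using T0 support2 unfolding A2_def by auto
  then have "finite T0" using finite_E by (rule finite_subset)
  then have "insert e T0 \<in> A2 E b2" using \<open>T0 \<subseteq> E\<close> T0(2) e unfolding A2_def by auto
  then have "U2 C \<sigma>1 (return_pmf (insert e T0)) \<le> U2 C \<sigma>1 (return_pmf T0)"
    using U2_best_response[of "return_pmf (insert e T0)"] U2_return_on_support[OF T0(1)] by simp
  then show ?thesis
    using hit_prob_le_1[OF support1, of e] U2_return_right_insert[OF support1 \<open>finite T0\<close> e(2)]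
    by linarith
qed

text \<open>If some target set is short, an element $r$ left uncovered by a placement in the support
  is a strict improvement over any element with hit probability 1, hence lies in every target
  set of the support.\<close>

lemma uncovered_in_every_target:
  assumes T0: "T0 \<in> set_pmf \<sigma>2" "card T0 < b2"
    and S: "S \<in> set_pmf \<sigma>1" and r: "r \<in> E" "r \<notin> CS C S"
    and T: "T \<in> set_pmf \<sigma>2"
  shows "r \<in> T"
proof (rule ccontr)
  assume "r \<notin> T"
  have "T \<subseteq> E" "card T \<le> b2" using T support2 unfolding A2_def by auto
  then have "finite T" using finite_E by (auto intro: finite_subset)
  have hit_r: "hit_prob \<sigma>1 r < 1" by (rule hit_prob_less_1[OF support1 S r(2)])
  obtain T' where "T' \<in> A2 E b2" "U2 C \<sigma>1 (return_pmf T) < U2 C \<sigma>1 (return_pmf T')"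
  proof (cases "card T < b2")
    case True
    then have "insert r T \<in> A2 E b2"
      using \<open>T \<subseteq> E\<close> \<open>finite T\<close> r unfolding A2_def by (auto simp: card_insert_if)
    then show ?thesis
      using that hit_r U2_return_right_insert[OF support1 \<open>finite T\<close> \<open>r \<notin> T\<close>] by fastforce
  next
    case False
    then have "card T0 < card T" using T0(2) \<open>card T \<le> b2\<close> by linarith
    moreover have "finite T0" using T0(1) support2 finite_E unfolding A2_def by (auto intro: finite_subset)
    ultimately obtain t where t: "t \<in> T" "t \<notin> T0" by (meson card_mono leD subsetI)
    then have hit_t: "hit_prob \<sigma>1 t = 1"
      using hit_prob_eq_1_off_short_target[OF T0] \<open>T \<subseteq> E\<close> by blast
    have T_split: "T = insert t (T - {t})" using t(1) by blast
    have "insert r (T - {t}) \<in> A2 E b2"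
      using \<open>T \<subseteq> E\<close> \<open>card T \<le> b2\<close> \<open>finite T\<close> r t(1) b2_pos unfolding A2_def
      by (auto simp: card_insert_if)
    moreover have "U2 C \<sigma>1 (return_pmf T) < U2 C \<sigma>1 (return_pmf (insert r (T - {t})))"
      using U2_return_right_insert[OF support1, of "T - {t}" t] \<open>finite T\<close> \<open>r \<notin> T\<close> hit_r hit_t
        U2_return_right_insert[OF support1, of "T - {t}" r] T_split by simp
    ultimately show ?thesis by (rule that)
  qed
  then show False
    using U2_best_response[of "return_pmf T'"] U2_return_on_support[OF T] by simp
qed

text \<open>Swapping any $j \in S$ for a sensor that monitors $r$ must not pay off, so the elements
  monitored by $j$ alone carry at least the pick probability of $r$.\<close>

lemma card_mult_pick_prob_le:
  assumes S: "S \<in> set_pmf \<sigma>1" and r: "r \<in> E" "r \<notin> CS C S"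
  shows "real (card S) * pick_prob \<sigma>2 r \<le> (\<Sum>e\<in>CS C S. pick_prob \<sigma>2 e)"
proof -
  have "S \<subseteq> V" "card S \<le> b1" using S support1 unfolding A1_def by auto
  have "finite S" using \<open>S \<subseteq> V\<close> finite_V by (rule finite_subset)
  define only where "only j = CS C S - CS C (S - {j})" for j
  obtain i where i: "i \<in> V" "r \<in> C i" using C_covers r(1) by blast
  let ?P = "\<lambda>X. \<Sum>e\<in>X. pick_prob \<sigma>2 e"
  have "pick_prob \<sigma>2 r \<le> ?P (only j)" if j: "j \<in> S" for j
  proof -
    have sub: "CS C (S - {j}) \<subseteq> CS C S" unfolding CS_def by auto
    have "insert i (S - {j}) \<subseteq> V" using i \<open>S \<subseteq> V\<close> by auto
    moreover have "card (insert i (S - {j})) \<le> b1"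
    proof -
      have "0 < card S" using j \<open>finite S\<close> by (auto simp: card_gt_0_iff)
      then show ?thesis using \<open>card S \<le> b1\<close> \<open>finite S\<close> j by (auto simp: card_insert_if)
    qed
    ultimately have "set_pmf (return_pmf (insert i (S - {j}))) \<subseteq> A1 V b1"
      unfolding A1_def by simp
    have "pick_prob \<sigma>2 r + ?P (CS C (S - {j})) = ?P (insert r (CS C (S - {j})))"
      using r(2) sub finite_CS[OF \<open>S \<subseteq> V\<close>] by (subst sum.insert) (auto intro: finite_subset)
    also have "\<dots> \<le> ?P (CS C (insert i (S - {j})))"
      using i finite_CS[OF \<open>insert i (S - {j}) \<subseteq> V\<close>] pick_prob_nonneg
      by (intro sum_mono2) (auto simp: CS_def)
    also have "\<dots> = U1 C (return_pmf (insert i (S - {j}))) \<sigma>2"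
      using U1_return_left_eq_sum_pick_prob[OF support2 \<open>insert i (S - {j}) \<subseteq> V\<close>] by simp
    also have "\<dots> \<le> U1 C \<sigma>1 \<sigma>2" by (rule U1_best_response) fact
    also have "\<dots> = ?P (CS C S)"
      using U1_return_on_support[OF S] U1_return_left_eq_sum_pick_prob[OF support2 \<open>S \<subseteq> V\<close>]
      by simp
    also have "\<dots> = ?P (only j) + ?P (CS C (S - {j}))"
      unfolding only_def using sum.subset_diff[OF sub finite_CS[OF \<open>S \<subseteq> V\<close>]] .
    finally show ?thesis by simp
  qed
  then have "real (card S) * pick_prob \<sigma>2 r \<le> (\<Sum>j\<in>S. ?P (only j))"
    using sum_mono[of S "\<lambda>_. pick_prob \<sigma>2 r"] by simp
  also have "\<dots> = ?P (\<Union>j\<in>S. only j)"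
    using \<open>finite S\<close> finite_CS[OF \<open>S \<subseteq> V\<close>]
    by (subst sum.UNION_disjoint) (auto simp: only_def CS_def intro: finite_subset)
  also have "\<dots> \<le> ?P (CS C S)"
    using finite_CS[OF \<open>S \<subseteq> V\<close>] pick_prob_nonneg by (intro sum_mono2) (auto simp: only_def)
  finally show ?thesis .
qed

lemma target_full_budget:
  assumes T0: "T0 \<in> set_pmf \<sigma>2"
  shows "card T0 = b2"
proof (rule ccontr)
  assume "card T0 \<noteq> b2"
  then have short: "card T0 < b2" using T0 support2 unfolding A2_def by fastforce
  obtain S where S: "S \<in> set_pmf \<sigma>1" using set_pmf_not_empty by fast
  then have "S \<subseteq> V" "card S = b1" using support1 placement_full_budget unfolding A1_def by auto
  have "finite S" using \<open>S \<subseteq> V\<close> finite_V by (rule finite_subset)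
  define R where "R = E - CS C S"
  have pick_R: "pick_prob \<sigma>2 r = 1" if "r \<in> R" for r
    using that uncovered_in_every_target[OF T0 short S] unfolding R_def
    by (intro pick_prob_eq_1[OF support2]) auto
  have "\<not> set_cover V E C S"
    using n_star_le_card[OF finite_V] \<open>card S = b1\<close> b1_less_n_star by fastforce
  then obtain r where "r \<in> R" unfolding R_def set_cover_def using CS_subset \<open>S \<subseteq> V\<close> by blast
  obtain P where "set_packing V E C P" "card P = m_star V E C" using m_star_attained[OF finite_E] .
  then have "real (m_star V E C) \<le> real (card S) * pick_prob \<sigma>2 r + (\<Sum>e\<in>R. pick_prob \<sigma>2 e)"
    using set_packing_card_le[OF _ \<open>S \<subseteq> V\<close> \<open>finite S\<close> finite_E] pick_R \<open>r \<in> R\<close>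
    unfolding R_def by fastforce
  also have "\<dots> \<le> (\<Sum>e\<in>CS C S. pick_prob \<sigma>2 e) + (\<Sum>e\<in>R. pick_prob \<sigma>2 e)"
    using card_mult_pick_prob_le[OF S] \<open>r \<in> R\<close> unfolding R_def by simp
  also have "\<dots> = (\<Sum>e\<in>E. pick_prob \<sigma>2 e)"
    using sum.subset_diff[OF CS_subset[OF \<open>S \<subseteq> V\<close>] finite_E, of "pick_prob \<sigma>2"]
    unfolding R_def by linarith
  also have "\<dots> \<le> real b2" by (rule sum_pick_prob_le[OF support2])
  finally show False using b2_less_m_star by simp
qed

lemma optimal_if_nash: "maxmin_opt V E C b1 b2 \<sigma>1 \<and> minmax_opt V E C b1 b2 \<sigma>2"
proof -
  have s1: "set_pmf \<sigma>1 \<subseteq> A1bar V b1" using support1 placement_full_budget unfolding A1_def A1bar_def by auto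
  have s2: "set_pmf \<sigma>2 \<subseteq> A2bar E b2" using support2 target_full_budget unfolding A2_def A2bar_def by auto
  have U1_le: "U1 C \<sigma>1 \<sigma>2 \<le> U1 C \<sigma>1 \<tau>2" if "set_pmf \<tau>2 \<subseteq> A2bar E b2" for \<tau>2
    using U2_best_response[of \<tau>2] that A2bar_subset U2_full_budget[OF support1 that]
      U2_full_budget[OF support1 s2] by auto
  have "security_level \<tau>1 \<le> security_level \<sigma>1" if "set_pmf \<tau>1 \<subseteq> A1bar V b1" for \<tau>1
  proof -
    have "security_level \<tau>1 \<le> U1 C \<tau>1 \<sigma>2"
      using that A1bar_subset by (intro security_level_le_U1[OF _ s2]) auto
    also have "\<dots> \<le> U1 C \<sigma>1 \<sigma>2" using U1_best_response that A1bar_subset by auto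
    also have "\<dots> \<le> security_level \<sigma>1" using U1_le by (simp add: security_level_ge_iff)
    finally show ?thesis .
  qed
  moreover have "best_response_value \<sigma>2 \<le> best_response_value \<tau>2" if "set_pmf \<tau>2 \<subseteq> A2bar E b2" for \<tau>2
  proof -
    have "best_response_value \<sigma>2 \<le> U1 C \<sigma>1 \<sigma>2"
      using U1_best_response A1bar_subset by (auto simp: best_response_value_le_iff)
    also have "\<dots> \<le> U1 C \<sigma>1 \<tau>2" by (rule U1_le[OF that])
    also have "\<dots> \<le> best_response_value \<tau>2"
      using that A2bar_subset by (intro U1_le_best_response_value[OF support1]) auto
    finally show ?thesis .
  qed
  ultimately show ?thesis unfolding maxmin_opt_iff minmax_opt_iff using s1 s2 by blast
qed

end

theorem proposition2:
  fixes V :: "'v set" and E :: "'e set" and C :: "'v \<Rightarrow> 'e set" and b1 b2 :: nat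
  assumes "finite V" "V \<noteq> {}" "finite E" "E \<noteq> {}"
    and "\<forall>i\<in>V. C i \<subseteq> E"
    and "\<forall>e\<in>E. \<exists>i\<in>V. e \<in> C i"
    and "0 < b1" "0 < b2"
    and "b1 < n_star V E C" "b2 < m_star V E C"
  shows "(\<forall>\<sigma>1 \<sigma>2. nash V E C b1 b2 \<sigma>1 \<sigma>2 \<longrightarrow>
            (\<forall>S\<in>set_pmf \<sigma>1. card S = b1) \<and> (\<forall>T\<in>set_pmf \<sigma>2. card T = b2))
       \<and> (\<forall>\<sigma>1 \<sigma>2. nash V E C b1 b2 \<sigma>1 \<sigma>2 \<longleftrightarrow>
            maxmin_opt V E C b1 b2 \<sigma>1 \<and> minmax_opt V E C b1 b2 \<sigma>2)"
proof -
  interpret detection_game V E C b1 b2 using assms by unfold_locales auto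
  have equilibrium: "detection_equilibrium V E C b1 b2 \<sigma>1 \<sigma>2" if "nash V E C b1 b2 \<sigma>1 \<sigma>2" for \<sigma>1 \<sigma>2
    using detection_game_axioms that
    unfolding detection_equilibrium_def detection_equilibrium_axioms_def by blast
  show ?thesis
    using detection_equilibrium.placement_full_budget[OF equilibrium]
      detection_equilibrium.target_full_budget[OF equilibrium]
      detection_equilibrium.optimal_if_nash[OF equilibrium] nash_if_optimal
    by blast
qed

end
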